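(* Let $\Sigma=(0,\infty]$, let $a,b\in\mathbb{N}$ with $a,b>1$, and let $c\in\mathbb{R}$ with $c>0$. Fix $z\in\Sigma^{\infty}$ with $l(z)=\infty$ and $z_k\neq\infty$ for all $k\in\omega_b$ with $k\geq 2$. Let $$\Sigma_{b,c}^{\infty}:=\{y\in\Sigma^{\infty}: 2\leq l(y),\ y_1=c,\ y_k=\infty \text{ for all } k\notin\omega_b \text{ with } 2\leq k\leq l(y)\}.$$ Define $\Theta_{a,b}^{z}:\Sigma_{b,c}^{\infty}\to\Sigma_{b,c}^{\infty}$ by $\Theta_{a,b}^{z}(x)=x_{\Theta_{a,b}^{z}}$, where $$(x_{\Theta_{a,b}^{z}})_k:=\begin{cases} c & \text{if } k=1,\\ \infty & \text{if } k\notin\omega_b \text{ and } 2\leq k\leq l(x)+1,\\ a\cdot x_{k/b}+z_k & \text{if } k\in\omega_b \text{ and } k/b\leq l(x).\end{cases}$$ Then $\Theta_{a,b}^{z}$ has a unique fixed point $v\in\Sigma_{b,c}^{\infty}$, and this fixed point satisfies $l(v)=\infty$.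
   Context: $\mathbb{N}$ denotes the set of positive integers. For an alphabet (nonempty set) $\Sigma$, $\Sigma^{\infty}$ denotes the set of all nonempty finite and infinite sequences (words) over $\Sigma$; for $x\in\Sigma^\infty$, $l(x)\in[1,\infty]$ is its length and $x_k$ its $k$-th letter ($1\le k\le l(x)$). For $b\in\mathbb{N}$, $\omega_b=\{b^k:k\in\mathbb{N}\}$. Arithmetic on $(0,\infty]$ uses the usual conventions ($a\cdot\infty+t=\infty$). *)

theory Defs
  imports "HOL-Library.Extended_Real"
begin

text \<open>Words over \<Sigma> = (0,\<infinity>] are pairs (L, f): L :: enat is the length (L \<ge> 1),
  f k is the k-th letter for 1 \<le> k \<le> L; outside that range f is padded with 0
  (so that equality of pairs coincides with equality of words).\<close>

definition words :: "(enat \<times> (nat \<Rightarrow> ereal)) set" where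
  "words = {(L, f). L \<ge> 1 \<and> (\<forall>k. 1 \<le> k \<and> enat k \<le> L \<longrightarrow> f k > 0)
                   \<and> (\<forall>k. \<not> (1 \<le> k \<and> enat k \<le> L) \<longrightarrow> f k = 0)}"

definition omega :: "nat \<Rightarrow> nat set" where
  "omega b = {b ^ k | k. k \<ge> 1}"

definition Sigma_bc :: "nat \<Rightarrow> real \<Rightarrow> (enat \<times> (nat \<Rightarrow> ereal)) set" where
  "Sigma_bc b c = {(L, f) \<in> words. 2 \<le> L \<and> f 1 = ereal c \<and>
      (\<forall>k. k \<notin> omega b \<and> 2 \<le> k \<and> enat k \<le> L \<longrightarrow> f k = \<infinity>)}"

definition Theta_dom :: "nat \<Rightarrow> enat \<Rightarrow> nat set" where
  "Theta_dom b L = {1} \<union> {k. k \<notin> omega b \<and> 2 \<le> k \<and> enat k \<le> L + 1}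
                    \<union> {k. k \<in> omega b \<and> enat (k div b) \<le> L}"

text \<open>Length of x_\<Theta>: the longest initial segment {1..n} on which x_\<Theta> is defined.\<close>
definition Theta_len :: "nat \<Rightarrow> enat \<Rightarrow> enat" where
  "Theta_len b L = Sup {enat n | n. \<forall>k. 1 \<le> k \<and> k \<le> n \<longrightarrow> k \<in> Theta_dom b L}"

definition Theta :: "nat \<Rightarrow> nat \<Rightarrow> real \<Rightarrow> (nat \<Rightarrow> ereal)
                      \<Rightarrow> enat \<times> (nat \<Rightarrow> ereal) \<Rightarrow> enat \<times> (nat \<Rightarrow> ereal)" where
  "Theta a b c z x =
     (let L = Theta_len b (fst x) in
      (L, \<lambda>k. if 1 \<le> k \<and> enat k \<le> L then
                 (if k = 1 then ereal c
                  else if k \<notin> omega b then \<infinity>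
                  else ereal (real a) * snd x (k div b) + z k)
               else 0))"

end

theory Submission
  imports Defs
begin

text \<open>The defining clauses of x_\<Theta> only refer to letters x_{k/b} with k/b < k, so they determine
  a word letter by letter; hence the fixed point is unique and is computed by a recursion along
  the powers of b. Its length is \<infinity> because x_\<Theta> is always strictly longer than a finite x:
  for b \<ge> 2 every index k \<le> l(x) + 1 has k/b \<le> l(x), so x_\<Theta> is defined on {1..l(x)+1}.\<close>

lemma omega_ge_base: "k \<in> omega b \<Longrightarrow> b \<le> k"
  by (cases "b = 0") (auto simp: omega_def self_le_power)

lemma omega_ge_2: "1 < b \<Longrightarrow> k \<in> omega b \<Longrightarrow> 2 \<le> k"
  using omega_ge_base by fastforce

lemma Theta_len_infinity: "Theta_len b \<infinity> = \<infinity>"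
proof -
  have "{enat n | n. \<forall>k. 1 \<le> k \<and> k \<le> n \<longrightarrow> k \<in> Theta_dom b \<infinity>} = range enat"
    by (auto simp: Theta_dom_def)
  moreover have "inj enat" by (rule injI) simp
  ultimately show ?thesis
    by (simp add: Theta_len_def Sup_enat_def finite_image_iff)
qed

lemma Theta_len_enat_gt:
  assumes "1 < b" "1 \<le> m"
  shows "enat m < Theta_len b (enat m)"
proof -
  have "k \<in> Theta_dom b (enat m)" if "1 \<le> k" "k \<le> Suc m" for k
  proof (cases "k = 1")
    case False
    have "k div b \<le> k div 2" using assms by (simp add: div_le_mono2)
    also have "\<dots> \<le> m" using that assms by linarith
    finally show ?thesis using that False by (auto simp: Theta_dom_def one_enat_def)
  qed (simp add: Theta_dom_def)
  then have "enat (Suc m) \<le> Theta_len b (enat m)"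
    unfolding Theta_len_def by (intro Sup_upper) blast
  then show ?thesis by (simp add: Suc_ile_eq)
qed

lemma Theta_len_fixed_imp_infinity:
  assumes "1 < b" "1 \<le> L" "Theta_len b L = L"
  shows "L = \<infinity>"
proof (rule ccontr)
  assume "L \<noteq> \<infinity>"
  then obtain m where m: "L = enat m" by (cases L) auto
  with assms(2) have "1 \<le> m" by (simp add: one_enat_def)
  with Theta_len_enat_gt[OF assms(1)] assms(3) m show False by fastforce
qed

definition Theta_letters ::
    "nat \<Rightarrow> nat \<Rightarrow> real \<Rightarrow> (nat \<Rightarrow> ereal) \<Rightarrow> (nat \<Rightarrow> ereal) \<Rightarrow> nat \<Rightarrow> ereal" where
  "Theta_letters a b c z f k =
     (if k = 0 then 0 else if k = 1 then ereal c else if k \<notin> omega b then \<infinity>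
      else ereal (real a) * f (k div b) + z k)"

lemma Theta_infinite: "Theta a b c z (\<infinity>, f) = (\<infinity>, Theta_letters a b c z f)"
  by (auto simp: Theta_def Theta_letters_def Theta_len_infinity intro!: ext)

text \<open>The guard b \<le> 1 only serves termination; for b \<le> 1 the value is junk.\<close>
function fixed_letters :: "nat \<Rightarrow> nat \<Rightarrow> real \<Rightarrow> (nat \<Rightarrow> ereal) \<Rightarrow> nat \<Rightarrow> ereal" where
  "fixed_letters a b c z k =
     (if k = 0 then 0 else if k = 1 then ereal c else if k \<notin> omega b then \<infinity>
      else if b \<le> 1 then 0 else ereal (real a) * fixed_letters a b c z (k div b) + z k)"
  by pat_completeness auto
termination
  by (relation "measure (\<lambda>(a, b, c, z, k). k)") auto

declare fixed_letters.simps [simp del]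

lemma Theta_letters_fixed_letters:
  assumes "1 < b"
  shows "Theta_letters a b c z (fixed_letters a b c z) = fixed_letters a b c z"
proof
  fix k show "Theta_letters a b c z (fixed_letters a b c z) k = fixed_letters a b c z k"
    using assms by (subst fixed_letters.simps) (simp add: Theta_letters_def)
qed

lemma Theta_letters_fixed_unique:
  assumes "1 < b" "Theta_letters a b c z f = f"
  shows "f = fixed_letters a b c z"
proof
  fix k show "f k = fixed_letters a b c z k"
  proof (induction k rule: less_induct)
    case (less k)
    have "f k = Theta_letters a b c z f k" using assms(2) by simp
    also have "\<dots> = Theta_letters a b c z (fixed_letters a b c z) k"
      using less.IH assms(1) by (auto simp: Theta_letters_def)
    finally show ?case using Theta_letters_fixed_letters[OF assms(1)] by simp
  qed
qed

lemma fixed_letters_pos: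
  assumes "1 < b" "0 < c" "\<And>k. 1 \<le> k \<Longrightarrow> 0 < z k" "1 \<le> k"
  shows "0 < fixed_letters a b c z k"
  using assms(4)
proof (induction k rule: less_induct)
  case (less k)
  show ?case
  proof (cases "k \<in> omega b")
    case True
    with assms(1) have "1 \<le> k div b" "k div b < k"
      using omega_ge_base[OF True] by (auto simp: Suc_le_eq div_greater_zero_iff)
    with less.IH have "0 \<le> ereal (real a) * fixed_letters a b c z (k div b)"
      by (simp add: ereal_zero_le_0_iff less_imp_le)
    with assms(3)[OF less.prems] have "0 < ereal (real a) * fixed_letters a b c z (k div b) + z k"
      by (metis add_nonneg_pos)
    with True assms(1) omega_ge_2[OF assms(1) True] show ?thesis
      by (subst fixed_letters.simps) simp
  qed (use assms(2) less.prems in \<open>subst fixed_letters.simps, auto\<close>)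
qed

lemma fixed_letters_Sigma_bc:
  assumes "1 < b" "0 < c" "(\<infinity>, z) \<in> words"
  shows "(\<infinity>, fixed_letters a b c z) \<in> Sigma_bc b c"
proof -
  have "\<And>k. 1 \<le> k \<Longrightarrow> 0 < z k" using assms(3) by (auto simp: words_def)
  with fixed_letters_pos[OF assms(1,2)] show ?thesis
    by (auto simp: Sigma_bc_def words_def not_less_eq_eq fixed_letters.simps)
qed

theorem theorem4:
  fixes a b :: nat and c :: real and z :: "nat \<Rightarrow> ereal"
  assumes "a > 1" and "b > 1" and "c > 0"
    and "(\<infinity>, z) \<in> words"
    and "\<And>k. k \<in> omega b \<Longrightarrow> k \<ge> 2 \<Longrightarrow> z k \<noteq> \<infinity>"
  shows "(\<exists>!v. v \<in> Sigma_bc b c \<and> Theta a b c z v = v) \<and>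
         (\<forall>v. v \<in> Sigma_bc b c \<and> Theta a b c z v = v \<longrightarrow> fst v = \<infinity>)"
proof -
  have infinite: "fst v = \<infinity>" if "v \<in> Sigma_bc b c" "Theta a b c z v = v" for v
  proof (rule Theta_len_fixed_imp_infinity[OF assms(2)])
    show "1 \<le> fst v" using that(1) by (auto simp: Sigma_bc_def words_def)
    show "Theta_len b (fst v) = fst v" using arg_cong[OF that(2), of fst] by (simp add: Theta_def Let_def)
  qed
  have unique: "v = (\<infinity>, fixed_letters a b c z)"
    if fixed: "v \<in> Sigma_bc b c" "Theta a b c z v = v" for v
  proof -
    obtain f where v: "v = (\<infinity>, f)" using infinite[OF fixed] by (cases v) auto
    with fixed(2) have "Theta_letters a b c z f = f" by (simp add: Theta_infinite)
    with v show ?thesis using Theta_letters_fixed_unique[OF assms(2)] by simp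
  qed
  have "Theta a b c z (\<infinity>, fixed_letters a b c z) = (\<infinity>, fixed_letters a b c z)"
    by (simp add: Theta_infinite Theta_letters_fixed_letters[OF assms(2)])
  with fixed_letters_Sigma_bc[OF assms(2-4)] unique infinite show ?thesis by blast
qed

end
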